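(* Let $n\ge1$ and $\varepsilon_0>0$. For Lebesgue-almost every $\boldsymbol\alpha\in[0,1]^n$, for all $C\ge1$, all $\eta>0$ and all $T\ge1$, $$S_2^*(\boldsymbol\alpha,T)\ll_{n,\boldsymbol\alpha,C,\eta,\varepsilon_0}(\log\log T)^{2+n+\eta}(\log T)^n.$$
   Context: $\|x\|$ is the distance to the nearest integer and $\log x$ means $\log\max\{x,e\}$. For fixed $\varepsilon_0>0$, $C\ge1$, $\boldsymbol\alpha\in[0,1]^n$, $T\ge1$, $$S_2^*(\boldsymbol\alpha,T):=\sum\frac{1}{q\|q\alpha_1\|\cdots\|q\alpha_n\|},$$ the sum being over integers $0<q\le T$ with $(\log T)^{-n-\varepsilon_0}<q\|q\alpha_1\|\cdots\|q\alpha_n\|\le(\log T)^{C}$. *)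

theory Defs
  imports "HOL-Analysis.Analysis"
begin

definition nint_dist :: "real \<Rightarrow> real" where
  "nint_dist x = \<bar>x - of_int (round x)\<bar>"

text \<open>The paper's convention: log x means log max{x, e}.\<close>
definition Lg :: "real \<Rightarrow> real" where
  "Lg x = ln (max x (exp 1))"

definition qprod :: "real^'n \<Rightarrow> nat \<Rightarrow> real" where
  "qprod \<alpha> q = real q * (\<Prod>i\<in>UNIV. nint_dist (real q * \<alpha> $ i))"

definition S2star :: "real \<Rightarrow> real \<Rightarrow> real^'n \<Rightarrow> real \<Rightarrow> real" where
  "S2star eps0 C \<alpha> T =
     (\<Sum>q \<in> {q. 0 < q \<and> real q \<le> T \<and>
                 Lg T powr (- real CARD('n) - eps0) < qprod \<alpha> q \<and>
                 qprod \<alpha> q \<le> Lg T powr C}.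
        1 / qprod \<alpha> q)"

end

theory Submission
  imports Defs
begin

text \<open>A first-moment argument. Sorting the terms of \<open>S\<^sub>2\<^sup>*(\<alpha>, T)\<close> by the dyadic sizes
  \<open>\<parallel>q\<alpha>\<^sub>i\<parallel> \<approx> 2^-k\<^sub>i\<close> dominates the sum by weighted indicators of unions of boxes around the
  rationals \<open>a/q\<close>. Each weight is compensated by the volume of its boxes, so the integral over
  \<open>\<alpha>\<close> is \<open>\<Sum>\<^sub>q\<^sub>\<le>\<^sub>T 8^n/q\<close> times the number of admissible profiles \<open>k\<close>; the window
  \<open>(log T)^(-n-\<epsilon>\<^sub>0) < \<dots> \<le> (log T)^C\<close> leaves \<open>O(log log T \<cdot> (log T)^(n-1))\<close> of them, and the
  harmonic sum contributes one more \<open>log T\<close>. Along \<open>T\<^sub>k = exp (exp k)\<close>, Markov's inequality and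
  Borel--Cantelli then give \<open>S\<^sub>2\<^sup>*(\<alpha>, T\<^sub>k) \<ll> k^3 e^(kn)\<close> for almost every \<open>\<alpha>\<close>, and monotonicity
  in \<open>T\<close> interpolates between consecutive \<open>T\<^sub>k\<close>.\<close>

lemma nint_dist_nonneg: "0 \<le> nint_dist x"
  by (simp add: nint_dist_def)

lemma nint_dist_le_half: "nint_dist x \<le> 1/2"
  using of_int_round_abs_le[of x] by (simp add: nint_dist_def abs_minus_commute)

definition rational_box_cover :: "nat \<Rightarrow> ('n::finite \<Rightarrow> real) \<Rightarrow> (real^'n) set" where
  "rational_box_cover q r = (\<Union>a \<in> PiE UNIV (\<lambda>_. {0..int q}).
     cbox (\<chi> i. (of_int (a i) - r i) / real q) (\<chi> i. (of_int (a i) + r i) / real q))"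

lemma mem_rational_box_cover:
  fixes \<alpha> :: "real^'n::finite"
  assumes q: "q > 0" and cube: "\<forall>i. 0 \<le> \<alpha> $ i \<and> \<alpha> $ i \<le> 1"
    and r: "\<forall>i. nint_dist (real q * \<alpha> $ i) \<le> r i"
  shows "\<alpha> \<in> rational_box_cover q r"
proof -
  define a where "a = (\<lambda>i. round (real q * \<alpha> $ i))"
  have "0 \<le> a i \<and> a i \<le> int q" for i
  proof -
    have "round (0::real) \<le> a i" unfolding a_def using cube by (intro round_mono) simp
    moreover have "a i \<le> round (real q)" unfolding a_def using cube q
      by (intro round_mono) (simp add: mult_left_le)
    ultimately show ?thesis by simp
  qed
  then have a_in: "a \<in> PiE UNIV (\<lambda>_. {0..int q})" by auto
  have "\<alpha> \<in> cbox (\<chi> i. (of_int (a i) - r i) / real q) (\<chi> i. (of_int (a i) + r i) / real q)"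
  proof (unfold mem_box_cart, intro allI)
    fix i
    have "\<bar>real q * \<alpha> $ i - of_int (a i)\<bar> \<le> r i"
      using r unfolding a_def nint_dist_def by auto
    then show "(\<chi> i. (of_int (a i) - r i) / real q) $ i \<le> \<alpha> $ i \<and>
        \<alpha> $ i \<le> (\<chi> i. (of_int (a i) + r i) / real q) $ i"
      using q by (auto simp: field_simps abs_le_iff)
  qed
  then show ?thesis unfolding rational_box_cover_def using a_in by blast
qed

lemma rational_box_cover_sets [measurable]: "rational_box_cover q r \<in> sets lborel"
  unfolding rational_box_cover_def by (intro sets.finite_UN) (auto intro!: finite_PiE)

lemma emeasure_rational_box_cover_le:
  fixes r :: "'n::finite \<Rightarrow> real"
  assumes q: "q > 0" and r: "\<forall>i. 0 \<le> r i"
  shows "emeasure lborel (rational_box_cover q r)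
           \<le> ennreal ((real q + 1) ^ CARD('n) * (\<Prod>i\<in>UNIV. 2 * r i / real q))"
proof -
  let ?A = "PiE UNIV (\<lambda>_::'n. {0..int q})"
  let ?B = "\<lambda>a. cbox (\<chi> i. (of_int (a i) - r i) / real q) (\<chi> i. (of_int (a i) + r i) / real q)
                :: (real^'n) set"
  have "emeasure lborel (rational_box_cover q r) \<le> (\<Sum>a\<in>?A. emeasure lborel (?B a))"
    unfolding rational_box_cover_def
    by (rule emeasure_subadditive_finite) (auto intro!: finite_PiE)
  also have "\<dots> = (\<Sum>a\<in>?A. ennreal (\<Prod>i\<in>UNIV. 2 * r i / real q))"
  proof (rule sum.cong[OF refl])
    fix a
    have ne: "?B a \<noteq> {}" using r q
      by (auto simp: box_ne_empty(1) Basis_vec_def inner_axis cart_eq_inner_axis[symmetric]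
          divide_right_mono)
    have "emeasure lborel (?B a) = ennreal (measure lborel (?B a))"
      using emeasure_lborel_cbox_finite by (intro emeasure_eq_ennreal_measure) (simp add: less_top)
    also have "measure lborel (?B a) = (\<Prod>i\<in>UNIV. 2 * r i / real q)"
      by (subst content_cbox_cart[OF ne])
        (auto intro!: prod.cong simp: diff_divide_distrib[symmetric])
    finally show "emeasure lborel (?B a) = ennreal (\<Prod>i\<in>UNIV. 2 * r i / real q)" .
  qed
  also have "\<dots> = of_nat ((q + 1) ^ CARD('n)) * ennreal (\<Prod>i\<in>UNIV. 2 * r i / real q)"
    by (simp add: card_PiE nat_add_distrib)
  also have "\<dots> = ennreal ((real q + 1) ^ CARD('n) * (\<Prod>i\<in>UNIV. 2 * r i / real q))"
    using r by (simp add: ennreal_mult' prod_nonneg ennreal_of_nat_eq_real_of_nat add.commute)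
  finally show ?thesis .
qed

lemma dyadic_bracket_exists:
  fixes u :: real
  assumes "0 < u" "u \<le> 1"
  shows "\<exists>k::nat. (1/2) ^ Suc k < u \<and> u \<le> (1/2) ^ k"
proof -
  have ex: "\<exists>m::nat. (1/2) ^ m < u" using real_arch_pow_inv[OF assms(1), of "1/2"] by auto
  define m where "m = (LEAST m::nat. (1/2) ^ m < u)"
  have m: "(1/2::real) ^ m < u" unfolding m_def by (rule LeastI_ex[OF ex])
  then obtain k where mk: "m = Suc k" using assms(2) by (cases m) auto
  have "\<not> (1/2::real) ^ k < u"
    using not_less_Least[of k "\<lambda>m. (1/2::real) ^ m < u"] mk unfolding m_def by auto
  then show ?thesis using m mk by auto
qed

lemma prod_dyadic_bracket:
  fixes u :: "'n::finite \<Rightarrow> real" and k :: "'n \<Rightarrow> nat"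
  assumes k: "\<And>i. (1/2) ^ Suc (k i) < u i \<and> u i \<le> (1/2) ^ k i"
  shows "(1/2) ^ (sum k UNIV + CARD('n)) < (\<Prod>i\<in>UNIV. u i)"
    and "(\<Prod>i\<in>UNIV. u i) \<le> (1/2) ^ sum k UNIV"
proof -
  have u_pos: "0 < u i" for i
    using k[of i] zero_less_power[of "1/2::real" "Suc (k i)"] by linarith
  have "(\<Prod>i\<in>UNIV. (1/2::real) ^ Suc (k i)) < (\<Prod>i\<in>UNIV. u i)"
  proof (rule prod_mono_strict[of undefined])
    fix i show "0 \<le> (1/2::real) ^ Suc (k i) \<and> (1/2) ^ Suc (k i) \<le> u i"
      using k[of i] by (simp del: power_Suc)
  qed (use k u_pos in auto)
  moreover have "(\<Sum>i\<in>UNIV. Suc (k i)) = sum k UNIV + CARD('n)"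
    using sum.distrib[of k "\<lambda>_. 1::nat" UNIV] by simp
  ultimately show "(1/2) ^ (sum k UNIV + CARD('n)) < (\<Prod>i\<in>UNIV. u i)"
    by (metis power_sum)
  have "(\<Prod>i\<in>UNIV. u i) \<le> (\<Prod>i\<in>UNIV. (1/2::real) ^ k i)"
    using k u_pos by (intro prod_mono) (auto intro: less_imp_le)
  then show "(\<Prod>i\<in>UNIV. u i) \<le> (1/2) ^ sum k UNIV" by (simp add: power_sum)
qed

text \<open>A profile \<open>k\<close> stands for \<open>2^-(k i + 1) < \<parallel>q \<alpha>\<^sub>i\<parallel> \<le> 2^-k i\<close>; the two conditions are what
  \<open>L < qprod \<alpha> q \<le> U\<close> forces on such a profile.\<close>
definition dyadic_profiles :: "nat \<Rightarrow> real \<Rightarrow> real \<Rightarrow> ('n::finite \<Rightarrow> nat) set" where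
  "dyadic_profiles q L U =
     {k. real q / U < 2 ^ (sum k UNIV + CARD('n)) \<and> 2 ^ sum k UNIV < real q / L}"

lemma finite_sum_eq:
  "finite {k::'n::finite \<Rightarrow> nat. sum k UNIV = s}"
proof (rule finite_subset)
  have "k i \<le> sum k UNIV" for k :: "'n \<Rightarrow> nat" and i by (rule member_le_sum) auto
  then show "{k::'n \<Rightarrow> nat. sum k UNIV = s} \<subseteq> PiE UNIV (\<lambda>_. {..s})" by auto
qed (auto intro!: finite_PiE)

lemma finite_dyadic_profiles:
  assumes "L > 0"
  shows "finite (dyadic_profiles q L U :: ('n::finite \<Rightarrow> nat) set)"
proof -
  define B where "B = nat \<lceil>real q / L\<rceil>"
  have "dyadic_profiles q L U \<subseteq> (\<Union>s\<le>B. {k::'n \<Rightarrow> nat. sum k UNIV = s})"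
  proof
    fix k :: "'n \<Rightarrow> nat" assume "k \<in> dyadic_profiles q L U"
    then have "real (sum k UNIV) < real q / L"
      using of_nat_less_two_power[of "sum k UNIV", where 'a=real] by (simp add: dyadic_profiles_def)
    then have "sum k UNIV \<le> B" unfolding B_def by linarith
    then show "k \<in> (\<Union>s\<le>B. {k. sum k UNIV = s})" by auto
  qed
  then show ?thesis by (rule finite_subset) (auto intro: finite_sum_eq)
qed

lemma inverse_qprod_le_dyadic_sum:
  fixes \<alpha> :: "real^'n::finite"
  assumes q: "q > 0" and cube: "\<forall>i. 0 \<le> \<alpha> $ i \<and> \<alpha> $ i \<le> 1"
    and L: "0 < L" and lower: "L < qprod \<alpha> q" and upper: "qprod \<alpha> q \<le> U"
  shows "ennreal (1 / qprod \<alpha> q) \<le>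
     (\<Sum>k\<in>dyadic_profiles q L U. ennreal (2 ^ (sum k UNIV + CARD('n)) / real q) *
        indicator (rational_box_cover q (\<lambda>i. (1/2) ^ k i)) \<alpha>)"
proof -
  define u where "u = (\<lambda>i. nint_dist (real q * \<alpha> $ i))"
  define P where "P = (\<Prod>i\<in>UNIV. u i)"
  define n where "n = CARD('n)"
  have qprod: "qprod \<alpha> q = real q * P" unfolding qprod_def P_def u_def by simp
  have q_pos: "real q > 0" using q by simp
  have P_pos: "P > 0" using qprod lower L q_pos by (smt (verit) mult_nonneg_nonpos)
  have u_ne: "u i \<noteq> 0" for i using P_pos unfolding P_def by (metis UNIV_I finite less_irrefl prod_zero_iff)
  have "0 < u i \<and> u i \<le> 1" for i
    using u_ne[of i] nint_dist_nonneg[of "real q * \<alpha> $ i"] nint_dist_le_half[of "real q * \<alpha> $ i"]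
    unfolding u_def by linarith
  then have "\<forall>i. \<exists>k. (1/2) ^ Suc k < u i \<and> u i \<le> (1/2) ^ k"
    using dyadic_bracket_exists by blast
  then obtain k where k: "\<And>i. (1/2) ^ Suc (k i) < u i \<and> u i \<le> (1/2) ^ k i"
    by metis
  define s where "s = sum k UNIV"
  have P_lower: "(1/2) ^ (s + n) < P" and P_upper: "P \<le> (1/2) ^ s"
    using prod_dyadic_bracket[OF k] unfolding P_def s_def n_def by auto
  have weight: "1 / qprod \<alpha> q \<le> 2 ^ (s + n) / real q"
  proof -
    have "1 / (real q * P) \<le> 1 / (real q * (1/2) ^ (s + n))"
      using P_lower P_pos q_pos by (intro divide_left_mono) (auto intro!: mult_pos_pos)
    then show ?thesis using qprod by (simp add: power_one_over field_simps)
  qed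
  have "real q * (1/2) ^ (s + n) < U" using P_lower q_pos upper qprod
    by (smt (verit) mult_strict_left_mono)
  moreover have "L < real q * (1/2) ^ s" using P_upper q_pos lower qprod
    by (smt (verit) mult_left_mono)
  moreover have "U > 0" using L lower upper by linarith
  ultimately have "k \<in> dyadic_profiles q L U"
    using L unfolding dyadic_profiles_def s_def n_def by (simp add: power_one_over field_simps)
  moreover have "\<alpha> \<in> rational_box_cover q (\<lambda>i. (1/2) ^ k i)"
    by (rule mem_rational_box_cover[OF q cube]) (use k u_def in auto)
  ultimately show ?thesis
    using weight unfolding s_def n_def
    by (intro order.trans[OF _ member_le_sum[of k]])
      (auto simp: finite_dyadic_profiles[OF L] intro: ennreal_leI)
qed

lemma card_sum_eq_le:
  "card {k::'n::finite \<Rightarrow> nat. sum k UNIV = s} \<le> (s + 1) ^ (CARD('n) - 1)"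
proof -
  obtain i0 :: 'n where True by simp
  let ?S = "{k::'n \<Rightarrow> nat. sum k UNIV = s}"
  let ?f = "\<lambda>k::'n \<Rightarrow> nat. restrict k (- {i0})"
  have split: "sum k UNIV = k i0 + sum k (- {i0})" for k :: "'n \<Rightarrow> nat"
    by (metis Compl_eq_Diff_UNIV UNIV_I finite sum.remove)
  have "inj_on ?f ?S"
  proof (rule inj_onI)
    fix k1 k2 assume k1: "k1 \<in> ?S" and k2: "k2 \<in> ?S" and eq: "?f k1 = ?f k2"
    have e: "k1 i = k2 i" if "i \<noteq> i0" for i using fun_cong[OF eq, of i] that by simp
    then have "sum k1 (- {i0}) = sum k2 (- {i0})" by (intro sum.cong) auto
    then have "k1 i0 = k2 i0" using k1 k2 split[of k1] split[of k2] by simp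
    with e show "k1 = k2" by (metis ext)
  qed
  then have "card ?S = card (?f ` ?S)" by (rule card_image[symmetric])
  also have "\<dots> \<le> card (PiE (- {i0}) (\<lambda>_::'n. {0..s}))"
  proof (intro card_mono)
    have "k i \<le> sum k UNIV" for k :: "'n \<Rightarrow> nat" and i by (rule member_le_sum) auto
    then show "?f ` ?S \<subseteq> PiE (- {i0}) (\<lambda>_. {0..s})" by (auto split: if_splits)
  qed (auto intro!: finite_PiE)
  also have "\<dots> = (s + 1) ^ (CARD('n) - 1)"
    by (simp add: card_PiE Compl_eq_Diff_UNIV card_Diff_singleton)
  finally show ?thesis .
qed

lemma card_nat_between_le:
  fixes a b :: real
  assumes "a \<le> b"
  shows "real (card {s::nat. a < real s \<and> real s < b}) \<le> b - a + 2"
proof -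
  have sub: "{s::nat. a < real s \<and> real s < b} \<subseteq> {nat \<lfloor>a\<rfloor> ..< nat \<lceil>b\<rceil>}"
  proof
    fix s assume "s \<in> {s::nat. a < real s \<and> real s < b}"
    then have "a < real s" "real s < b" by auto
    then show "s \<in> {nat \<lfloor>a\<rfloor> ..< nat \<lceil>b\<rceil>}" by (auto, linarith+)
  qed
  have "card {s::nat. a < real s \<and> real s < b} \<le> nat \<lceil>b\<rceil> - nat \<lfloor>a\<rfloor>"
    using card_mono[OF _ sub] by simp
  moreover have "real (nat \<lceil>b\<rceil> - nat \<lfloor>a\<rfloor>) \<le> b - a + 2"
    using assms by (cases "a < 0"; cases "b < 0") (auto simp: of_nat_diff, linarith+)
  ultimately show ?thesis by (meson of_nat_le_iff order_trans)
qed

lemma sum_dyadic_profile_bounds: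
  fixes k :: "'n::finite \<Rightarrow> nat"
  assumes k: "k \<in> dyadic_profiles q L U" and q: "real q > 0" and L: "0 < L" and U: "0 < U"
  shows "log 2 (real q / U) - CARD('n) < real (sum k UNIV)"
    and "real (sum k UNIV) < log 2 (real q / L)"
proof -
  have "log 2 (real q / U) < log 2 (2 ^ (sum k UNIV + CARD('n)))"
    using k q U unfolding dyadic_profiles_def by (subst log_less_cancel_iff) auto
  then show "log 2 (real q / U) - CARD('n) < real (sum k UNIV)" by simp
  have "log 2 (2 ^ sum k UNIV) < log 2 (real q / L)"
    using k q L unfolding dyadic_profiles_def by (subst log_less_cancel_iff) auto
  then show "real (sum k UNIV) < log 2 (real q / L)" by simp
qed

text \<open>A profile with \<open>\<Sum> k = s\<close> forces \<open>log\<^sub>2 (q/U) - n < s < log\<^sub>2 (q/L)\<close>: there are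
  \<open>O(log (U/L))\<close> admissible values of \<open>s\<close>, each carried by at most \<open>(s+1)\<^sup>n\<^sup>-\<^sup>1\<close> profiles.\<close>
lemma card_dyadic_profiles_le:
  assumes L: "0 < L" and LU: "L \<le> U" and q: "q > 0"
  shows "real (card (dyadic_profiles q L U :: ('n::finite \<Rightarrow> nat) set))
      \<le> (log 2 (U / L) + real CARD('n) + 2) * (max 0 (log 2 (real q / L)) + 1) ^ (CARD('n) - 1)"
proof -
  define n where "n = CARD('n)"
  define b where "b = log 2 (real q / L)"
  define a where "a = log 2 (real q / U) - n"
  define S where "S = {s::nat. a < real s \<and> real s < b}"
  have U: "U > 0" and q_pos: "real q > 0" using L LU q by auto
  have "real q / U \<le> real q / L" using LU L q_pos by (intro divide_left_mono) auto
  then have "log 2 (real q / U) \<le> log 2 (real q / L)" using q_pos U by (intro log_mono) auto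
  then have ab: "a \<le> b" unfolding a_def b_def by simp
  have "S \<subseteq> {..<nat \<lceil>b\<rceil>}"
  proof
    fix s assume "s \<in> S"
    then have "real s < b" unfolding S_def by simp
    then show "s \<in> {..<nat \<lceil>b\<rceil>}" by simp linarith
  qed
  then have finite_S: "finite S" by (rule finite_subset) simp
  have card_S: "real (card S) \<le> log 2 (U / L) + n + 2"
    using card_nat_between_le[OF ab] q_pos L U unfolding S_def a_def b_def
    by (simp add: log_divide_pos)
  have profiles_sub: "dyadic_profiles q L U \<subseteq> (\<Union>s\<in>S. {k::'n \<Rightarrow> nat. sum k UNIV = s})"
    using sum_dyadic_profile_bounds[OF _ q_pos L U] unfolding S_def a_def b_def n_def by blast
  have "card (dyadic_profiles q L U :: ('n \<Rightarrow> nat) set)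
      \<le> card (\<Union>s\<in>S. {k::'n \<Rightarrow> nat. sum k UNIV = s})"
    using finite_S finite_sum_eq by (intro card_mono[OF _ profiles_sub]) auto
  also have "\<dots> \<le> (\<Sum>s\<in>S. card {k::'n \<Rightarrow> nat. sum k UNIV = s})"
    by (rule card_UN_le[OF finite_S])
  finally have "real (card (dyadic_profiles q L U :: ('n \<Rightarrow> nat) set))
      \<le> (\<Sum>s\<in>S. real (card {k::'n \<Rightarrow> nat. sum k UNIV = s}))"
    by (metis of_nat_le_iff of_nat_sum)
  also have "\<dots> \<le> (\<Sum>s\<in>S. (max 0 b + 1) ^ (n - 1))"
  proof (rule sum_mono)
    fix s assume s: "s \<in> S"
    have "real (card {k::'n \<Rightarrow> nat. sum k UNIV = s}) \<le> real ((s + 1) ^ (n - 1))"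
      unfolding n_def by (rule of_nat_mono[OF card_sum_eq_le])
    also have "\<dots> = (real s + 1) ^ (n - 1)" by (simp add: add.commute)
    also have "\<dots> \<le> (max 0 b + 1) ^ (n - 1)"
      using s unfolding S_def by (intro power_mono) auto
    finally show "real (card {k::'n \<Rightarrow> nat. sum k UNIV = s}) \<le> (max 0 b + 1) ^ (n - 1)" .
  qed
  also have "\<dots> \<le> (log 2 (U / L) + n + 2) * (max 0 b + 1) ^ (n - 1)"
    using card_S by (simp add: mult_right_mono)
  finally show ?thesis unfolding b_def n_def .
qed

lemma Lg_ge_1: "Lg T \<ge> 1"
proof -
  have "0 < max T (exp 1)" by (simp add: max.strict_coboundedI2)
  then have "ln (exp 1) \<le> ln (max T (exp 1))" by (subst ln_le_cancel_iff) auto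
  then show ?thesis unfolding Lg_def by simp
qed

lemma Lg_mono: "T \<le> T' \<Longrightarrow> Lg T \<le> Lg T'"
  unfolding Lg_def by (subst ln_le_cancel_iff) (auto intro: max.strict_coboundedI2)

lemma Lg_exp_exp: "0 \<le> x \<Longrightarrow> Lg (exp (exp x)) = exp x"
  unfolding Lg_def by (simp add: max_def)

lemma S2star_mono:
  assumes eps: "eps0 > 0" and C: "0 \<le> C" "C \<le> C'" and T: "T \<le> T'"
  shows "S2star eps0 C (\<alpha>::real^'n::finite) T \<le> S2star eps0 C' \<alpha> T'"
proof -
  let ?a = "- real CARD('n) - eps0"
  have Lg: "Lg T \<le> Lg T'" by (rule Lg_mono[OF T])
  have lower: "Lg T' powr ?a \<le> Lg T powr ?a"
    using Lg_ge_1[of T] Lg eps by (intro powr_mono2') auto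
  have "Lg T powr C \<le> Lg T' powr C"
    using Lg_ge_1[of T] Lg C by (intro powr_mono2) auto
  also have "\<dots> \<le> Lg T' powr C'"
    using Lg_ge_1[of T'] C by (intro powr_mono) auto
  finally have upper: "Lg T powr C \<le> Lg T' powr C'" .
  have L_pos: "0 < Lg T' powr ?a" using Lg_ge_1[of T'] by simp
  let ?A = "{q. 0 < q \<and> real q \<le> T \<and> Lg T powr ?a < qprod \<alpha> q \<and> qprod \<alpha> q \<le> Lg T powr C}"
  let ?B = "{q. 0 < q \<and> real q \<le> T' \<and> Lg T' powr ?a < qprod \<alpha> q \<and> qprod \<alpha> q \<le> Lg T' powr C'}"
  have "(\<Sum>q\<in>?A. 1 / qprod \<alpha> q) \<le> (\<Sum>q\<in>?B. 1 / qprod \<alpha> q)"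
  proof (rule sum_mono2)
    show "finite ?B"
      by (rule finite_subset[of _ "{..nat \<lfloor>T'\<rfloor>}"]) (auto simp: le_nat_floor)
    show "?A \<subseteq> ?B" using T lower upper by auto
    show "0 \<le> 1 / qprod \<alpha> q" if "q \<in> ?B - ?A" for q
      using that L_pos by (smt (verit) Diff_iff divide_nonneg_pos mem_Collect_eq)
  qed
  then show ?thesis unfolding S2star_def .
qed

definition dyadic_majorant :: "real \<Rightarrow> real \<Rightarrow> real \<Rightarrow> real^'n::finite \<Rightarrow> ennreal" where
  "dyadic_majorant eps0 C T \<alpha> =
     (\<Sum>q\<in>{1..nat \<lfloor>T\<rfloor>}.
        \<Sum>k\<in>dyadic_profiles q (Lg T powr (- real CARD('n) - eps0)) (Lg T powr C).
          ennreal (2 ^ (sum k UNIV + CARD('n)) / real q) *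
          indicator (rational_box_cover q (\<lambda>i. (1/2) ^ k i)) \<alpha>)"

lemma dyadic_majorant_measurable [measurable]:
  "dyadic_majorant eps0 C T \<in> borel_measurable (lborel :: (real^'n::finite) measure)"
  unfolding dyadic_majorant_def by measurable

lemma S2star_le_dyadic_majorant:
  fixes \<alpha> :: "real^'n::finite"
  assumes cube: "\<forall>i. 0 \<le> \<alpha> $ i \<and> \<alpha> $ i \<le> 1"
  shows "ennreal (S2star eps0 C \<alpha> T) \<le> dyadic_majorant eps0 C T \<alpha>"
proof -
  define L where "L = Lg T powr (- real CARD('n) - eps0)"
  define U where "U = Lg T powr C"
  define Q where "Q = {q. 0 < q \<and> real q \<le> T \<and> L < qprod \<alpha> q \<and> qprod \<alpha> q \<le> U}"
  define F where "F = (\<lambda>q. \<Sum>k\<in>(dyadic_profiles q L U :: ('n \<Rightarrow> nat) set).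
      ennreal (2 ^ (sum k UNIV + CARD('n)) / real q) *
      indicator (rational_box_cover q (\<lambda>i. (1/2) ^ k i)) \<alpha>)"
  have L: "L > 0" unfolding L_def using Lg_ge_1[of T] by simp
  have Q_sub: "Q \<subseteq> {1..nat \<lfloor>T\<rfloor>}" unfolding Q_def by (auto simp: le_nat_floor)
  have "ennreal (S2star eps0 C \<alpha> T) = (\<Sum>q\<in>Q. ennreal (1 / qprod \<alpha> q))"
    unfolding S2star_def L_def[symmetric] U_def[symmetric] Q_def[symmetric]
    using L by (intro sum_ennreal[symmetric]) (auto simp: Q_def)
  also have "\<dots> \<le> (\<Sum>q\<in>Q. F q)"
  proof (rule sum_mono)
    fix q assume "q \<in> Q"
    then show "ennreal (1 / qprod \<alpha> q) \<le> F q"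
      unfolding F_def Q_def by (intro inverse_qprod_le_dyadic_sum[OF _ cube L]) auto
  qed
  also have "\<dots> \<le> (\<Sum>q\<in>{1..nat \<lfloor>T\<rfloor>}. F q)"
    by (rule sum_mono2[OF _ Q_sub]) auto
  also have "\<dots> = dyadic_majorant eps0 C T \<alpha>"
    unfolding dyadic_majorant_def F_def L_def U_def by simp
  finally show ?thesis .
qed

lemma dyadic_weight_times_cover_measure_le:
  fixes k :: "'n::finite \<Rightarrow> nat"
  assumes q: "q > 0"
  shows "ennreal (2 ^ (sum k UNIV + CARD('n)) / real q) *
           emeasure lborel (rational_box_cover q (\<lambda>i. (1/2) ^ k i)) \<le> ennreal (8 ^ CARD('n) / real q)"
proof -
  define n where "n = CARD('n)"
  define s where "s = sum k UNIV"
  have q_pos: "real q > 0" using q by simp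
  have "(\<Prod>i\<in>UNIV. 2 * (1/2::real) ^ k i / real q) = (\<Prod>i\<in>UNIV. (2 / real q) * (1/2) ^ k i)"
    by (rule prod.cong) auto
  also have "\<dots> = (\<Prod>i\<in>(UNIV::'n set). 2 / real q) * (\<Prod>i\<in>UNIV. (1/2::real) ^ k i)"
    by (rule prod.distrib)
  also have "\<dots> = (2 / real q) ^ n * (1/2) ^ s"
    unfolding n_def s_def by (simp add: power_sum)
  finally have box: "(\<Prod>i\<in>UNIV. 2 * (1/2::real) ^ k i / real q) = (2 / real q) ^ n * (1/2) ^ s" .
  have half: "(2::real) ^ s * (1/2) ^ s = 1" by (simp add: power_mult_distrib[symmetric])
  have h2: "((real q + 1) / real q) ^ n \<le> 2 ^ n"
    using q_pos by (intro power_mono) (auto simp: field_simps)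
  have "2 ^ (s + n) / real q * ((real q + 1) ^ n * ((2 / real q) ^ n * (1/2) ^ s))
      = (2 ^ s * (1/2) ^ s) * 4 ^ n * ((real q + 1) / real q) ^ n / real q"
    by (simp add: power_add power_divide field_simps power_mult_distrib[symmetric])
  also have "\<dots> \<le> 4 ^ n * 2 ^ n / real q"
    unfolding half using q_pos h2 by (intro divide_right_mono mult_left_mono) auto
  also have "\<dots> = 8 ^ n / real q" by (simp add: power_mult_distrib[symmetric])
  finally have "2 ^ (s + n) / real q * ((real q + 1) ^ n * ((2 / real q) ^ n * (1/2) ^ s))
      \<le> 8 ^ n / real q" .
  then have "ennreal (2 ^ (s + n) / real q) * ennreal ((real q + 1) ^ n * (\<Prod>i\<in>UNIV. 2 * (1/2::real) ^ k i / real q))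
      \<le> ennreal (8 ^ n / real q)"
    unfolding box by (subst ennreal_mult'[symmetric]) (auto intro: ennreal_leI)
  moreover have "emeasure lborel (rational_box_cover q (\<lambda>i. (1/2::real) ^ k i))
      \<le> ennreal ((real q + 1) ^ n * (\<Prod>i\<in>UNIV. 2 * (1/2::real) ^ k i / real q))"
    unfolding n_def by (rule emeasure_rational_box_cover_le[OF q]) simp
  ultimately show ?thesis unfolding n_def s_def
    by (meson mult_left_mono order_trans zero_le)
qed

lemma nn_integral_dyadic_majorant_le:
  fixes T :: real
  assumes eps: "eps0 > 0" and C: "C \<ge> 0"
  defines "n \<equiv> CARD('n::finite)"
    and "L \<equiv> Lg T powr (- real CARD('n) - eps0)" and "U \<equiv> Lg T powr C"
  shows "(\<integral>\<^sup>+ \<alpha>. dyadic_majorant eps0 C T \<alpha> \<partial>(lborel :: (real^'n) measure)) \<le>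
    ennreal (\<Sum>q\<in>{1..nat \<lfloor>T\<rfloor>}. 8 ^ n / real q *
      ((log 2 (U / L) + n + 2) * (max 0 (log 2 (real q / L)) + 1) ^ (n - 1)))"
proof -
  define B where "B = (\<lambda>q::nat. (log 2 (U / L) + n + 2) * (max 0 (log 2 (real q / L)) + 1) ^ (n - 1))"
  let ?K = "\<lambda>q. dyadic_profiles q L U :: ('n \<Rightarrow> nat) set"
  let ?c = "\<lambda>q (k::'n \<Rightarrow> nat). ennreal (2 ^ (sum k UNIV + n) / real q)"
  let ?C = "\<lambda>q (k::'n \<Rightarrow> nat). rational_box_cover q (\<lambda>i. (1/2::real) ^ k i) :: (real^'n) set"
  have L: "0 < L" and U: "1 \<le> U"
    using Lg_ge_1[of T] C unfolding L_def U_def by (auto intro: ge_one_powr_ge_zero)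
  have L_le: "L \<le> 1"
    unfolding L_def using powr_mono[of "- real CARD('n) - eps0" 0 "Lg T"] Lg_ge_1[of T] eps by simp
  have B_nonneg: "0 \<le> B q" for q
    using L L_le U unfolding B_def by (intro mult_nonneg_nonneg) auto
  have "(\<integral>\<^sup>+ \<alpha>. dyadic_majorant eps0 C T \<alpha> \<partial>(lborel :: (real^'n) measure))
      = (\<Sum>q\<in>{1..nat \<lfloor>T\<rfloor>}. \<Sum>k\<in>?K q. \<integral>\<^sup>+ \<alpha>. ?c q k * indicator (?C q k) \<alpha> \<partial>lborel)"
    unfolding dyadic_majorant_def L_def[symmetric] U_def[symmetric] n_def
    by (simp add: nn_integral_sum)
  also have "\<dots> = (\<Sum>q\<in>{1..nat \<lfloor>T\<rfloor>}. \<Sum>k\<in>?K q. ?c q k * emeasure lborel (?C q k))"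
    by (intro sum.cong refl nn_integral_cmult_indicator rational_box_cover_sets)
  also have "\<dots> \<le> (\<Sum>q\<in>{1..nat \<lfloor>T\<rfloor>}. of_nat (card (?K q)) * ennreal (8 ^ n / real q))"
    unfolding n_def
    by (intro sum_mono order.trans[OF sum_mono[OF dyadic_weight_times_cover_measure_le]]) auto
  also have "\<dots> \<le> (\<Sum>q\<in>{1..nat \<lfloor>T\<rfloor>}. ennreal (8 ^ n / real q * B q))"
  proof (rule sum_mono)
    fix q assume "q \<in> {1..nat \<lfloor>T\<rfloor>}"
    then have "real (card (?K q)) \<le> B q"
      using card_dyadic_profiles_le[OF L, of U q, where 'n='n] L_le U unfolding B_def n_def by simp
    then show "of_nat (card (?K q)) * ennreal (8 ^ n / real q) \<le> ennreal (8 ^ n / real q * B q)"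
      by (simp add: ennreal_of_nat_eq_real_of_nat ennreal_mult''[symmetric] mult.commute
          ennreal_leI divide_right_mono mult_right_mono)
  qed
  also have "\<dots> = ennreal (\<Sum>q\<in>{1..nat \<lfloor>T\<rfloor>}. 8 ^ n / real q * B q)"
    using B_nonneg by (intro sum_ennreal) auto
  finally show ?thesis unfolding B_def .
qed

lemma log2_window_le:
  fixes x C c d :: real
  assumes "1 \<le> x" "0 \<le> C" "0 \<le> c" "0 \<le> d"
  shows "log 2 (exp (C * x) / exp (- c * x)) + d \<le> x * (2 * (C + c) + d)"
proof -
  have "log 2 (exp (C * x) / exp (- c * x)) = (C + c) * x / ln 2"
    unfolding log_def by (simp add: exp_diff[symmetric] algebra_simps)
  also have "\<dots> \<le> 2 * (C + c) * x"
  proof -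
    have "(C + c) * x * 1 \<le> (C + c) * x * (2 * ln 2)"
      using assms ln2_ge_two_thirds by (intro mult_left_mono) auto
    then show ?thesis by (simp add: divide_le_eq algebra_simps)
  qed
  moreover have "d * 1 \<le> d * x" using assms by (intro mult_left_mono) auto
  ultimately show ?thesis by (simp add: algebra_simps)
qed

lemma log2_profile_bound_le:
  fixes x c q :: real
  assumes q: "1 \<le> q" "ln q \<le> exp x" and "0 \<le> x" "0 \<le> c"
  shows "max 0 (log 2 (q / exp (- c * x))) + 1 \<le> exp x * (3 + 2 * c)"
proof -
  have "x \<le> exp x" using exp_ge_add_one_self[of x] by linarith
  have "log 2 (q / exp (- c * x)) = (ln q + c * x) / ln 2"
    unfolding log_def using q by (simp add: ln_div algebra_simps)
  also have "\<dots> \<le> 2 * (ln q + c * x)"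
  proof -
    have "(ln q + c * x) * 1 \<le> (ln q + c * x) * (2 * ln 2)"
      using assms ln2_ge_two_thirds by (intro mult_left_mono) auto
    then show ?thesis by (simp add: divide_le_eq algebra_simps)
  qed
  also have "\<dots> \<le> 2 * exp x + 2 * (c * exp x)"
    using assms \<open>x \<le> exp x\<close> mult_left_mono[of x "exp x" c] by simp
  finally have "log 2 (q / exp (- c * x)) \<le> 2 * exp x + 2 * (c * exp x)" .
  moreover have "1 \<le> exp x" "0 \<le> c * exp x" using assms by simp_all
  ultimately have "max 0 (log 2 (q / exp (- c * x))) \<le> 3 * exp x + 2 * (c * exp x) - 1"
    by (intro max.boundedI) linarith+
  then show ?thesis by (simp add: algebra_simps)
qed

lemma harm_le_1_plus_ln: "1 \<le> N \<Longrightarrow> (harm N :: real) \<le> 1 + ln (real N)"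
  using euler_mascheroni_sequence_decreasing[of 1 N] by (simp add: harm_def)

lemma nn_integral_dyadic_majorant_exp_exp_le:
  fixes eps0 C :: real
  assumes eps: "eps0 > 0" and C: "C \<ge> 0"
  shows "\<exists>D>0. \<forall>x\<ge>1. (\<integral>\<^sup>+ \<alpha>. dyadic_majorant eps0 C (exp (exp x)) \<alpha> \<partial>(lborel :: (real^'n::finite) measure))
           \<le> ennreal (D * x * exp x ^ CARD('n))"
proof (intro exI conjI allI impI)
  define n where "n = CARD('n)"
  define Z where "Z = 2 * (C + (n + eps0)) + (n + 2)"
  define W where "W = 3 + 2 * (n + eps0)"
  show D_pos: "0 < 8 ^ n * 2 * Z * W ^ (n - 1)"
    unfolding Z_def W_def using eps C by (intro mult_pos_pos zero_less_power) auto
  fix x :: real assume x: "1 \<le> x"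
  define T where "T = exp (exp x)"
  define N where "N = nat \<lfloor>T\<rfloor>"
  have LgT: "Lg T = exp x" unfolding T_def using x by (simp add: Lg_exp_exp)
  have L: "Lg T powr (- real n - eps0) = exp (- (n + eps0) * x)"
    and U: "Lg T powr C = exp (C * x)" unfolding LgT by (simp_all add: powr_def)
  have N: "1 \<le> N" "real N \<le> T" unfolding N_def T_def using x by (auto simp: le_nat_floor)
  have ln_le: "ln (real q) \<le> exp x" if "q \<in> {1..N}" for q
  proof -
    have "ln (real q) \<le> ln T" using that N by (subst ln_le_cancel_iff) (auto simp: T_def)
    then show ?thesis by (simp add: T_def)
  qed
  have "(\<Sum>q\<in>{1..N}. 8 ^ n / real q * ((log 2 (Lg T powr C / Lg T powr (- real n - eps0)) + n + 2) *
          (max 0 (log 2 (real q / Lg T powr (- real n - eps0))) + 1) ^ (n - 1)))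
      \<le> (\<Sum>q\<in>{1..N}. 8 ^ n / real q * (x * Z * (exp x * W) ^ (n - 1)))"
  proof (intro sum_mono mult_left_mono)
    fix q assume q: "q \<in> {1..N}"
    have "max 0 (log 2 (real q / exp (- (n + eps0) * x))) + 1 \<le> exp x * W"
      unfolding W_def using q eps x by (intro log2_profile_bound_le ln_le) auto
    moreover have "log 2 (exp (C * x) / exp (- (n + eps0) * x)) + (n + 2) \<le> x * Z"
      unfolding Z_def using eps x C by (intro log2_window_le) auto
    ultimately show "(log 2 (Lg T powr C / Lg T powr (- real n - eps0)) + n + 2) *
          (max 0 (log 2 (real q / Lg T powr (- real n - eps0))) + 1) ^ (n - 1)
        \<le> x * Z * (exp x * W) ^ (n - 1)"
      using x eps C unfolding L U Z_def by (intro mult_mono power_mono) (auto simp: add.assoc)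
  qed auto
  also have "\<dots> = 8 ^ n * (x * Z * (exp x * W) ^ (n - 1)) * harm N"
    by (simp add: harm_def sum_distrib_left sum_distrib_right divide_inverse mult_ac)
  also have "\<dots> \<le> 8 ^ n * (x * Z * (exp x * W) ^ (n - 1)) * (2 * exp x)"
  proof (intro mult_left_mono)
    have "1 \<le> exp x" using x by simp
    moreover have "ln (real N) \<le> exp x" using N(1) by (intro ln_le) simp
    ultimately show "harm N \<le> 2 * exp x" using harm_le_1_plus_ln[OF N(1)] by linarith
  qed (use x eps C in \<open>auto simp: Z_def W_def\<close>)
  also have "\<dots> = 8 ^ n * 2 * Z * W ^ (n - 1) * x * exp x ^ n"
    by (cases n) (simp_all add: n_def power_mult_distrib mult_ac)
  finally show "(\<integral>\<^sup>+ \<alpha>. dyadic_majorant eps0 C (exp (exp x)) \<alpha> \<partial>(lborel :: (real^'n) measure))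
      \<le> ennreal (8 ^ n * 2 * Z * W ^ (n - 1) * x * exp x ^ CARD('n))"
    using nn_integral_dyadic_majorant_le[OF eps C, of "exp (exp x)", where 'n='n]
    unfolding T_def N_def n_def by (auto intro: order.trans ennreal_leI)
qed

text \<open>First-moment Borel--Cantelli: Markov's inequality bounds \<open>measure {G j > B j}\<close> by \<open>b j / B j\<close>.\<close>
lemma AE_eventually_le_of_nn_integral_le:
  fixes G :: "nat \<Rightarrow> 'a \<Rightarrow> ennreal" and b B :: "nat \<Rightarrow> real"
  assumes [measurable]: "\<And>j. G j \<in> borel_measurable M"
    and integral: "\<And>j. (\<integral>\<^sup>+ x. G j x \<partial>M) \<le> ennreal (b j)"
    and b: "\<And>j. 0 \<le> b j" and B: "\<And>j. 0 < B j"
    and summable: "summable (\<lambda>j. b j / B j)"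
  shows "AE x in M. eventually (\<lambda>j. G j x \<le> ennreal (B j)) sequentially"
proof -
  define A where "A j = {x \<in> space M. ennreal (B j) < G j x}" for j
  have A_sets: "A j \<in> sets M" for j unfolding A_def by measurable
  have emeasure_A: "emeasure M (A j) \<le> ennreal (b j / B j)" for j
  proof -
    let ?c = "ennreal (1 / B j)"
    have "A j \<subseteq> {x \<in> space M. 1 \<le> ?c * G j x}"
    proof
      fix x assume "x \<in> A j"
      then have "ennreal (B j) \<le> G j x" "x \<in> space M" unfolding A_def by auto
      then have "?c * ennreal (B j) \<le> ?c * G j x" "x \<in> space M"
        by (simp_all add: mult_left_mono)
      moreover have "?c * ennreal (B j) = 1" using B[of j] by (simp add: ennreal_mult'[symmetric])
      ultimately show "x \<in> {x \<in> space M. 1 \<le> ?c * G j x}" by simp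
    qed
    then have "emeasure M (A j) \<le> emeasure M {x \<in> space M. 1 \<le> ?c * G j x}"
      by (intro emeasure_mono) measurable
    also have "\<dots> \<le> ?c * (\<integral>\<^sup>+ x. G j x * indicator (space M) x \<partial>M)"
      by (rule nn_integral_Markov_inequality) auto
    also have "(\<integral>\<^sup>+ x. G j x * indicator (space M) x \<partial>M) = (\<integral>\<^sup>+ x. G j x \<partial>M)"
      by (rule nn_integral_cong) simp
    also have "?c * \<dots> \<le> ?c * ennreal (b j)" by (intro mult_left_mono integral) auto
    also have "\<dots> = ennreal (b j / B j)" using B[of j] by (simp add: ennreal_mult'[symmetric])
    finally show ?thesis .
  qed
  have A_finite: "emeasure M (A j) < \<infinity>" for j
    using emeasure_A[of j] by (simp add: le_less_trans)
  have "measure M (A j) \<le> b j / B j" for j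
    using emeasure_A[of j] A_finite[of j] b[of j] B[of j]
    by (simp add: emeasure_eq_ennreal_measure less_top)
  then have "summable (\<lambda>j. measure M (A j))"
    by (intro summable_comparison_test'[OF summable, of 0]) auto
  then have "AE x in M. eventually (\<lambda>j. x \<in> space M - A j) sequentially"
    by (rule borel_cantelli_AE1[OF A_sets A_finite])
  then show ?thesis
  proof (rule AE_mp, intro AE_I2 impI)
    fix x assume "eventually (\<lambda>j. x \<in> space M - A j) sequentially"
    then show "eventually (\<lambda>j. G j x \<le> ennreal (B j)) sequentially"
      by (rule eventually_mono) (auto simp: A_def not_less)
  qed
qed

lemma eventually_le_imp_uniform_bound:
  fixes f g :: "nat \<Rightarrow> real"
  assumes "eventually (\<lambda>j. f j \<le> D * g j) sequentially" and g: "\<And>j. 1 \<le> g j"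
  shows "\<exists>K\<ge>0. \<forall>j. f j \<le> K * g j"
proof -
  obtain J where J: "\<And>j. J \<le> j \<Longrightarrow> f j \<le> D * g j"
    using assms(1) unfolding eventually_sequentially by blast
  define K where "K = \<bar>D\<bar> + (\<Sum>j<J. \<bar>f j\<bar>)"
  have "f j \<le> K * g j" for j
  proof (cases "J \<le> j")
    case True
    have "D * g j \<le> \<bar>D\<bar> * g j" using g[of j] by (intro mult_right_mono) auto
    also have "\<dots> \<le> K * g j" using g[of j] unfolding K_def by (intro mult_right_mono) auto
    finally show ?thesis using J[OF True] by linarith
  next
    case False
    then have "\<bar>f j\<bar> \<le> (\<Sum>j<J. \<bar>f j\<bar>)" by (intro member_le_sum) auto
    then have "f j \<le> (\<Sum>j<J. \<bar>f j\<bar>)" by linarith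
    also have "\<dots> \<le> K" unfolding K_def by simp
    also have "\<dots> \<le> K * g j"
      using g[of j] mult_left_mono[of 1 "g j" K] unfolding K_def by (simp add: sum_nonneg)
    finally show ?thesis .
  qed
  moreover have "K \<ge> 0" unfolding K_def by (simp add: sum_nonneg)
  ultimately show ?thesis by blast
qed

text \<open>Fixed \<open>C\<close>, along \<open>T\<^sub>k = exp (exp k)\<close>: the majorant integrates to \<open>O(k e^(kn))\<close>, so by
  Borel--Cantelli it is \<open>O(k^3 e^(kn))\<close> for almost every \<open>\<alpha>\<close>, the factors \<open>1/k^2\<close> being summable.\<close>
lemma AE_S2star_double_exponential_bound:
  fixes eps0 C :: real
  assumes eps: "eps0 > 0" and C: "C \<ge> 0"
  shows "AE \<alpha> in (lborel :: (real^'n::finite) measure). (\<forall>i. 0 \<le> \<alpha> $ i \<and> \<alpha> $ i \<le> 1) \<longrightarrow>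
     (\<exists>K\<ge>0. \<forall>k\<ge>1. S2star eps0 C \<alpha> (exp (exp (real k))) \<le> K * real k ^ 3 * exp (real k) ^ CARD('n))"
proof -
  define n where "n = CARD('n)"
  obtain D where D: "D > 0" and integral: "\<And>x. 1 \<le> x \<Longrightarrow>
      (\<integral>\<^sup>+ \<alpha>. dyadic_majorant eps0 C (exp (exp x)) \<alpha> \<partial>(lborel :: (real^'n) measure)) \<le> ennreal (D * x * exp x ^ n)"
    using nn_integral_dyadic_majorant_exp_exp_le[OF eps C, where 'n='n] unfolding n_def by blast
  define g where "g j = real (Suc j) ^ 3 * exp (real (Suc j)) ^ n" for j
  have g: "1 \<le> g j" for j
  proof -
    have "1 * 1 \<le> real (Suc j) ^ 3 * exp (real (Suc j)) ^ n"
      by (intro mult_mono one_le_power) auto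
    then show ?thesis unfolding g_def by simp
  qed
  have summable: "summable (\<lambda>j. D * real (Suc j) * exp (real (Suc j)) ^ n / (D * g j))"
  proof -
    have "D * x * e / (D * (x ^ 3 * e)) = inverse (x ^ 2)" if "x > 0" "e > 0" for x e :: real
      using D that by (simp add: field_simps power2_eq_square power3_eq_cube)
    moreover have "summable (\<lambda>j. inverse (real (Suc j) ^ 2))"
      using inverse_power_summable[of 2, where 'a=real] by (subst summable_Suc_iff) simp
    ultimately show ?thesis unfolding g_def by simp
  qed
  have "AE \<alpha> in (lborel :: (real^'n) measure). eventually (\<lambda>j.
      dyadic_majorant eps0 C (exp (exp (real (Suc j)))) \<alpha> \<le> ennreal (D * g j)) sequentially"
  proof (rule AE_eventually_le_of_nn_integral_le[OF _ _ _ _ summable])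
    show "(\<integral>\<^sup>+ \<alpha>. dyadic_majorant eps0 C (exp (exp (real (Suc j)))) \<alpha> \<partial>(lborel :: (real^'n) measure))
        \<le> ennreal (D * real (Suc j) * exp (real (Suc j)) ^ n)" for j
      by (rule integral) simp
    show "0 < D * g j" for j using D g[of j] by simp
  qed (use D in auto)
  then show ?thesis
  proof (rule AE_mp, intro AE_I2 impI)
    fix \<alpha> :: "real^'n" assume cube: "\<forall>i. 0 \<le> \<alpha> $ i \<and> \<alpha> $ i \<le> 1"
      and ev: "eventually (\<lambda>j. dyadic_majorant eps0 C (exp (exp (real (Suc j)))) \<alpha> \<le> ennreal (D * g j)) sequentially"
    have "eventually (\<lambda>j. S2star eps0 C \<alpha> (exp (exp (real (Suc j)))) \<le> D * g j) sequentially"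
      using ev
    proof eventually_elim
      case (elim j)
      have "ennreal (S2star eps0 C \<alpha> (exp (exp (real (Suc j))))) \<le> ennreal (D * g j)"
        using S2star_le_dyadic_majorant[OF cube] elim by (rule order.trans)
      moreover have "0 \<le> D * g j" using D g[of j] by simp
      ultimately show ?case by simp
    qed
    then have "\<exists>K\<ge>0. \<forall>j. S2star eps0 C \<alpha> (exp (exp (real (Suc j)))) \<le> K * g j"
      by (rule eventually_le_imp_uniform_bound) (rule g)
    then obtain K where "K \<ge> 0" and K: "\<And>j. S2star eps0 C \<alpha> (exp (exp (real (Suc j)))) \<le> K * g j"
      by blast
    moreover have "S2star eps0 C \<alpha> (exp (exp (real k))) \<le> K * real k ^ 3 * exp (real k) ^ n"
      if "k \<ge> 1" for k
      using K[of "k - 1"] that unfolding g_def by (simp add: mult.assoc)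
    ultimately show "\<exists>K\<ge>0. \<forall>k\<ge>1. S2star eps0 C \<alpha> (exp (exp (real k))) \<le> K * real k ^ 3 * exp (real k) ^ CARD('n)"
      unfolding n_def by blast
  qed
qed

lemma double_exponential_scale:
  assumes T: "exp 1 < T"
  obtains k :: nat where "1 \<le> k" "T \<le> exp (exp (real k))"
    and "real k \<le> 2 * Lg (Lg T)" and "exp (real k) \<le> exp 1 * Lg T"
proof
  define k where "k = nat \<lceil>ln (ln T)\<rceil>"
  have T_pos: "0 < T" using T by (meson exp_gt_zero less_trans)
  have lnT: "1 < ln T" using T T_pos by (metis ln_exp ln_less_cancel_iff exp_gt_zero)
  have LgT: "Lg T = ln T" unfolding Lg_def using T by (simp add: max_def)
  have llT: "0 < ln (ln T)" using lnT by simp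
  have k_ge: "ln (ln T) \<le> real k" and k_le: "real k \<le> ln (ln T) + 1"
    unfolding k_def using llT by linarith+
  show "1 \<le> k" unfolding k_def using llT by linarith
  have "ln T \<le> exp (real k)" using k_ge lnT by (metis exp_le_cancel_iff exp_ln less_trans zero_less_one)
  then show "T \<le> exp (exp (real k))" using T_pos by (metis exp_le_cancel_iff exp_ln)
  have "ln (ln T) \<le> Lg (Lg T)"
    unfolding LgT Lg_def[of "ln T"] using lnT by (subst ln_le_cancel_iff) auto
  then show "real k \<le> 2 * Lg (Lg T)" using k_le Lg_ge_1[of "Lg T"] by linarith
  have "exp (real k) \<le> exp (ln (ln T) + 1)" using k_le by simp
  then show "exp (real k) \<le> exp 1 * Lg T" using lnT unfolding LgT by (simp add: exp_add mult.commute)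
qed

text \<open>Between consecutive scales \<open>T\<^sub>k\<close> the bound \<open>k^3 e^(kn)\<close> becomes \<open>(log log T)^3 (log T)^n\<close>
  up to constants; \<open>3 \<le> 2 + n + \<eta>\<close> is where \<open>n \<ge> 1\<close> is used.\<close>
lemma S2star_bound_of_double_exponential_bound:
  fixes \<alpha> :: "real^'n::finite"
  assumes eps: "eps0 > 0" and C: "C \<ge> 0" and eta: "\<eta> > 0" and K: "K \<ge> 0"
    and H: "\<forall>k::nat\<ge>1. S2star eps0 C \<alpha> (exp (exp (real k))) \<le> K * real k ^ 3 * exp (real k) ^ CARD('n)"
  shows "\<exists>K'. \<forall>T\<ge>1. S2star eps0 C \<alpha> T \<le> K' * Lg (Lg T) powr (2 + real CARD('n) + \<eta>) * Lg T ^ CARD('n)"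
proof (intro exI allI impI)
  define n where "n = CARD('n)"
  fix T :: real
  define M where "M = Lg (Lg T) powr (2 + real n + \<eta>)"
  have M_nonneg: "0 \<le> M" unfolding M_def by simp
  show "S2star eps0 C \<alpha> T \<le> (8 * K * exp 1 ^ n) * Lg (Lg T) powr (2 + real CARD('n) + \<eta>) * Lg T ^ CARD('n)"
  proof (cases "T \<le> exp 1")
    case True
    then have Lg_T: "Lg T = 1" unfolding Lg_def by (simp add: max_def)
    have empty: "{q. 0 < q \<and> real q \<le> T \<and> 1 < qprod \<alpha> q \<and> qprod \<alpha> q \<le> 1} = {}" by auto
    have "S2star eps0 C \<alpha> T = 0" unfolding S2star_def Lg_T powr_one_eq_one empty by simp
    then show ?thesis using K M_nonneg Lg_ge_1[of T] unfolding M_def n_def by simp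
  next
    case False
    then obtain k :: nat where k: "1 \<le> k" "T \<le> exp (exp (real k))"
      and k_le: "real k \<le> 2 * Lg (Lg T)" and exp_k: "exp (real k) \<le> exp 1 * Lg T"
      using double_exponential_scale by (metis not_le)
    have "Lg (Lg T) ^ 3 = Lg (Lg T) powr 3" using Lg_ge_1[of "Lg T"] by (simp add: powr_realpow)
    also have "\<dots> \<le> M"
    proof -
      have "1 \<le> real n" unfolding n_def by (simp add: Suc_leI)
      then show ?thesis unfolding M_def using Lg_ge_1[of "Lg T"] eta by (intro powr_mono) auto
    qed
    finally have "real k ^ 3 \<le> 8 * M"
      using power_mono[OF k_le, of 3] by (simp add: power_mult_distrib)
    moreover have "exp (real k) ^ n \<le> exp 1 ^ n * Lg T ^ n"
      using power_mono[OF exp_k, of n] by (simp add: power_mult_distrib)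
    ultimately have "K * real k ^ 3 * exp (real k) ^ n \<le> K * (8 * M) * (exp 1 ^ n * Lg T ^ n)"
      using K M_nonneg by (intro mult_mono mult_left_mono) auto
    moreover have "S2star eps0 C \<alpha> T \<le> K * real k ^ 3 * exp (real k) ^ n"
      using S2star_mono[OF eps C order.refl k(2), of \<alpha>] H k(1) unfolding n_def by fastforce
    ultimately show ?thesis unfolding M_def n_def by (simp add: mult_ac)
  qed
qed

theorem mainTheorem12:
  fixes eps0 :: real
  assumes "eps0 > 0"
  shows "AE \<alpha> in (lborel :: (real^'n) measure).
           (\<forall>i. 0 \<le> \<alpha> $ i \<and> \<alpha> $ i \<le> 1) \<longrightarrow>
           (\<forall>C \<ge> 1. \<forall>\<eta> > 0. \<exists>K. \<forall>T \<ge> 1.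
              S2star eps0 C \<alpha> T \<le>
                K * Lg (Lg T) powr (2 + real CARD('n) + \<eta>) * Lg T ^ CARD('n))"
proof -
  have "AE \<alpha> in (lborel :: (real^'n) measure). \<forall>m::nat. (\<forall>i. 0 \<le> \<alpha> $ i \<and> \<alpha> $ i \<le> 1) \<longrightarrow>
      (\<exists>K\<ge>0. \<forall>k\<ge>1. S2star eps0 (real m) \<alpha> (exp (exp (real k))) \<le> K * real k ^ 3 * exp (real k) ^ CARD('n))"
    unfolding AE_all_countable using AE_S2star_double_exponential_bound[OF assms, where 'n='n] by simp
  then show ?thesis
  proof (rule AE_mp, intro AE_I2 impI allI)
    fix \<alpha> :: "real^'n" and C \<eta> :: real
    assume H: "\<forall>m::nat. (\<forall>i. 0 \<le> \<alpha> $ i \<and> \<alpha> $ i \<le> 1) \<longrightarrow> (\<exists>K\<ge>0. \<forall>k\<ge>1.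
        S2star eps0 (real m) \<alpha> (exp (exp (real k))) \<le> K * real k ^ 3 * exp (real k) ^ CARD('n))"
      and cube: "\<forall>i. 0 \<le> \<alpha> $ i \<and> \<alpha> $ i \<le> 1" and C: "1 \<le> C" and eta: "0 < \<eta>"
    define m where "m = nat \<lceil>C\<rceil>"
    have "C \<le> real m" unfolding m_def by linarith
    \<comment> \<open>enlarging \<open>C\<close> to the integer \<open>m\<close> only enlarges \<open>S2star\<close>, so countably many \<open>m\<close> suffice\<close>
    moreover obtain K where "K \<ge> 0" and "\<forall>k::nat\<ge>1.
        S2star eps0 (real m) \<alpha> (exp (exp (real k))) \<le> K * real k ^ 3 * exp (real k) ^ CARD('n)"
      using H cube by blast
    ultimately have "\<forall>k::nat\<ge>1. S2star eps0 C \<alpha> (exp (exp (real k))) \<le> K * real k ^ 3 * exp (real k) ^ CARD('n)"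
      using S2star_mono[OF assms _ _ order.refl, of C "real m"] C by (meson order.trans order_trans zero_le_one)
    then show "\<exists>K. \<forall>T\<ge>1. S2star eps0 C \<alpha> T \<le> K * Lg (Lg T) powr (2 + real CARD('n) + \<eta>) * Lg T ^ CARD('n)"
      using C by (intro S2star_bound_of_double_exponential_bound[OF assms _ eta \<open>K \<ge> 0\<close>]) auto
  qed
qed

end
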